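(* Let $(\mathbb N,S)$ be the natural numbers with the unary successor function $S(n)=n+1$. For all $a,b,c,d\in\mathbb N$, $$(\mathbb N,S)\models_e a:b::c:d\iff a-b=c-d.$$
   Context: Equational fragment: for an $L$-structure $\mathfrak A$ and $a,b\in A$, the set of equational justifications is $\uparrow^e_{\mathfrak A}(a\to b)=\{s(x,y)=t(x,y): s,t\ L\text{-terms in variables among }x,y,\ \text{the formula } s=t \text{ is a c-formula},\ \mathfrak A\models s(a,b)=t(a,b)\}$, where a c-formula is one whose free variables are exactly $x,y$ and whose dependency graph (vertices: its variables; edge between two variables iff they occur in a common atomic subformula) is connected. Put $\uparrow^e_{\mathfrak A}(a\to b:\cdot\, c\to d)=\uparrow^e_{\mathfrak A}(a\to b)\cap\uparrow^e_{\mathfrak A}(c\to d)$. An equation is trivial iff it lies in $\uparrow^e_{\mathfrak A}(a\to b:\cdot\, c\to d)$ for all $a,b,c,d$; $\emptyset^e$ denotes the set of trivial ones. $\mathfrak A\models_e a\to b:\cdot\, c\to d$ iff either $\uparrow^e_{\mathfrak A}(a\to b)\cup\uparrow^e_{\mathfrak A}(c\to d)$ consists only of trivial equations, or $\uparrow^e_{\mathfrak A}(a\to b:\cdot\, c\to d)$ contains a non-trivial equation and for every $d'$, $\emptyset^e\subsetneq\uparrow^e(a\to b:\cdot\, c\to d)\subseteq\uparrow^e(a\to b:\cdot\, c\to d')$ implies $\emptyset^e\subsetneq\uparrow^e(a\to b:\cdot\, c\to d')\subseteq\uparrow^e(a\to b:\cdot\, c\to d)$. $\mathfrak A\models_e a:b::c:d$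 iff $\mathfrak A\models_e a\to b:\cdot\, c\to d$, $b\to a:\cdot\, d\to c$, $c\to d:\cdot\, a\to b$ and $d\to c:\cdot\, b\to a$. Here $a-b$ denotes integer subtraction. *)

theory Defs
  imports Main
begin

datatype var = VX | VY

datatype trm = V var | S trm

fun eval :: "(var \<Rightarrow> nat) \<Rightarrow> trm \<Rightarrow> nat" where
  "eval \<rho> (V v) = \<rho> v"
| "eval \<rho> (S t) = Suc (eval \<rho> t)"

fun vars :: "trm \<Rightarrow> var set" where
  "vars (V v) = {v}"
| "vars (S t) = vars t"

type_synonym eqn = "trm \<times> trm"

text \<open>Dependency graph of the atomic formula s = t: vertices are its variables, and two
  variables are adjacent iff they occur in a common atomic subformula (here: the formula itself).\<close>
definition dep_edges :: "eqn \<Rightarrow> (var \<times> var) set" where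
  "dep_edges e = {(u, w). u \<in> vars (fst e) \<union> vars (snd e) \<and> w \<in> vars (fst e) \<union> vars (snd e)}"

definition c_formula :: "eqn \<Rightarrow> bool" where
  "c_formula e \<longleftrightarrow> vars (fst e) \<union> vars (snd e) = {VX, VY}
     \<and> (\<forall>u \<in> vars (fst e) \<union> vars (snd e). \<forall>w \<in> vars (fst e) \<union> vars (snd e).
          (u, w) \<in> (dep_edges e)\<^sup>*)"

definition env :: "nat \<Rightarrow> nat \<Rightarrow> var \<Rightarrow> nat" where
  "env a b = (\<lambda>v. case v of VX \<Rightarrow> a | VY \<Rightarrow> b)"

definition just :: "nat \<Rightarrow> nat \<Rightarrow> eqn set" where
  "just a b = {e. c_formula e \<and> eval (env a b) (fst e) = eval (env a b) (snd e)}"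

definition just2 :: "nat \<Rightarrow> nat \<Rightarrow> nat \<Rightarrow> nat \<Rightarrow> eqn set" where
  "just2 a b c d = just a b \<inter> just c d"

definition trivial_eqs :: "eqn set" where
  "trivial_eqs = {e. \<forall>a b c d. e \<in> just2 a b c d}"

definition models_arrow :: "nat \<Rightarrow> nat \<Rightarrow> nat \<Rightarrow> nat \<Rightarrow> bool" where
  "models_arrow a b c d \<longleftrightarrow>
     (just a b \<union> just c d \<subseteq> trivial_eqs) \<or>
     ((\<exists>e \<in> just2 a b c d. e \<notin> trivial_eqs) \<and>
      (\<forall>d'. (trivial_eqs \<subset> just2 a b c d \<and> just2 a b c d \<subseteq> just2 a b c d')
          \<longrightarrow> (trivial_eqs \<subset> just2 a b c d' \<and> just2 a b c d' \<subseteq> just2 a b c d)))"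

definition models_analogy :: "nat \<Rightarrow> nat \<Rightarrow> nat \<Rightarrow> nat \<Rightarrow> bool" where
  "models_analogy a b c d \<longleftrightarrow>
     models_arrow a b c d \<and> models_arrow b a d c \<and> models_arrow c d a b \<and> models_arrow d c b a"

end

theory Submission
  imports Defs
begin

text \<open>Every term is \<open>S\<^sup>k v\<close> for a variable \<open>v\<close>, so a c-formula is, up to orientation,
  \<open>S\<^sup>m x = S\<^sup>n y\<close>, and it holds at \<open>(a, b)\<close> exactly when \<open>a - b = n - m\<close>.
  Hence the justifications of \<open>a \<rightarrow> b\<close> depend only on \<open>a - b\<close>, two of them meet iff the
  differences agree, and no equation is trivial. Both clauses of \<open>\<Turnstile>\<^sub>e\<close> then reduce to
  \<open>a - b = c - d\<close>, which is symmetric under the four permutations of the analogy.\<close>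

fun term_var :: "trm \<Rightarrow> var" where
  "term_var (V v) = v"
| "term_var (S t) = term_var t"

fun term_depth :: "trm \<Rightarrow> nat" where
  "term_depth (V v) = 0"
| "term_depth (S t) = Suc (term_depth t)"

lemma eval_eq_var_plus_depth: "eval \<rho> t = \<rho> (term_var t) + term_depth t"
  by (induction t) auto

lemma vars_eq_term_var: "vars t = {term_var t}"
  by (induction t) auto

lemma term_var_funpow_S [simp]: "term_var ((S ^^ n) t) = term_var t"
  by (induction n) auto

lemma term_depth_funpow_S [simp]: "term_depth ((S ^^ n) t) = n + term_depth t"
  by (induction n) auto

lemma c_formula_iff: "c_formula e \<longleftrightarrow> {term_var (fst e), term_var (snd e)} = {VX, VY}"
  unfolding c_formula_def dep_edges_def vars_eq_term_var by auto

text \<open>The value of \<open>x - y\<close> forced by an equation between terms in \<open>x\<close> and \<open>y\<close>.\<close>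
definition shift :: "eqn \<Rightarrow> int" where
  "shift e = (if term_var (fst e) = VX
              then int (term_depth (snd e)) - int (term_depth (fst e))
              else int (term_depth (fst e)) - int (term_depth (snd e)))"

lemma mem_just_iff: "e \<in> just a b \<longleftrightarrow> c_formula e \<and> int a - int b = shift e"
proof (cases "c_formula e")
  case True
  obtain s t where e: "e = (s, t)" by fastforce
  have "term_var s = VX \<and> term_var t = VY \<or> term_var s = VY \<and> term_var t = VX"
    using True unfolding e c_formula_iff by (cases "term_var s"; cases "term_var t") auto
  then show ?thesis
  proof (elim disjE conjE)
    assume "term_var s = VX" "term_var t = VY"
    then show ?thesis
      using True by (simp add: e just_def shift_def eval_eq_var_plus_depth env_def) linarith
  next
    assume "term_var s = VY" "term_var t = VX"
    then show ?thesis
      using True by (simp add: e just_def shift_def eval_eq_var_plus_depth env_def) linarith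
  qed
qed (simp add: just_def)

lemma witness_mem_just: "((S ^^ b) (V VX), (S ^^ a) (V VY)) \<in> just a b"
  by (simp add: mem_just_iff c_formula_iff shift_def)

lemma just_eq_if_diff_eq: "int a - int b = int c - int d \<Longrightarrow> just a b = just c d"
  by (auto simp: mem_just_iff)

lemma diff_eq_if_mem_just2: "e \<in> just2 a b c d \<Longrightarrow> int a - int b = int c - int d"
  by (simp add: just2_def mem_just_iff)

lemma trivial_eqs_empty: "trivial_eqs = {}"
  using diff_eq_if_mem_just2[of _ 0 0 0 1] by (fastforce simp: trivial_eqs_def)

lemma models_arrow_iff: "models_arrow a b c d \<longleftrightarrow> int a - int b = int c - int d"
proof
  assume "models_arrow a b c d"
  moreover have "\<not> just a b \<union> just c d \<subseteq> trivial_eqs"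
    using witness_mem_just[where a = a and b = b] trivial_eqs_empty by blast
  ultimately obtain e where "e \<in> just2 a b c d"
    unfolding models_arrow_def by blast
  then show "int a - int b = int c - int d"
    by (rule diff_eq_if_mem_just2)
next
  assume diff: "int a - int b = int c - int d"
  let ?w = "((S ^^ b) (V VX), (S ^^ a) (V VY))"
  have just2_abcd: "just2 a b c d = just a b"
    using just_eq_if_diff_eq[OF diff] by (simp add: just2_def)
  have "just2 a b c d' = just2 a b c d" if "?w \<in> just2 a b c d'" for d'
    using just_eq_if_diff_eq[OF diff_eq_if_mem_just2[OF that]] just2_abcd
    by (simp add: just2_def)
  then show "models_arrow a b c d"
    using witness_mem_just[where a = a and b = b] just2_abcd trivial_eqs_empty
    unfolding models_arrow_def by blast
qed

theorem theorem13:
  fixes a b c d :: nat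
  shows "models_analogy a b c d \<longleftrightarrow> int a - int b = int c - int d"
  unfolding models_analogy_def models_arrow_iff by linarith

end
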